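(* Let $(X,S_b)$ be an $S_b$-metric space with $b\geq 1$, let $x_1,x_2\in X$, and let $f:X\to X$ be a self-mapping for which there exist $\alpha\in(0,1)$ and a non-decreasing function $\varphi:(0,\infty)\to(1,\infty)$ such that for all $x\in X\setminus\{x_1,x_2\}$, $$S_b(x,x,fx)>0 \implies \varphi\big(S_b(x,x,fx)\big)\leq \big[\varphi\big(|S_b(x,x,x_1)-S_b(x,x,x_2)|\big)\big]^{\alpha}$$ (i.e. $f$ is a Jleli-Samet type $H_{x_1,x_2}$-$S_b$-contraction). Let $$r=\inf\{S_b(x,x,fx): x\neq fx,\ x\in X\}.$$ If $fx_1=x_1$, $fx_2=x_2$ and $r>0$, then $f$ fixes the hyperbola $H^{S_b}_r(x_1,x_2)=\{x\in X: |S_b(x,x,x_1)-S_b(x,x,x_2)|=r\}$, i.e. $fx=x$ for every $x\in H^{S_b}_r(x_1,x_2)$.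
   Context: An $S_b$-metric space $(X,S_b)$ with constant $b\geq 1$ is a nonempty set $X$ with a function $S_b:X\times X\times X\to[0,\infty)$ such that for all $x,y,z,a\in X$: (1) $S_b(x,y,z)=0$ if and only if $x=y=z$; (2) $S_b(x,y,z)\leq b[S_b(x,x,a)+S_b(y,y,a)+S_b(z,z,a)]$. A mapping $f$ fixes a set $\mathcal{F}\subseteq X$ if $\mathcal{F}$ is contained in the fixed point set $\{x\in X: fx=x\}$. *)

theory Defs
  imports Complex_Main
begin

definition Sb_metric_space :: "'a set \<Rightarrow> ('a \<Rightarrow> 'a \<Rightarrow> 'a \<Rightarrow> real) \<Rightarrow> real \<Rightarrow> bool" where
  "Sb_metric_space X S b \<longleftrightarrow>
     X \<noteq> {} \<and> b \<ge> 1 \<and>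
     (\<forall>x\<in>X. \<forall>y\<in>X. \<forall>z\<in>X. S x y z \<ge> 0) \<and>
     (\<forall>x\<in>X. \<forall>y\<in>X. \<forall>z\<in>X. S x y z = 0 \<longleftrightarrow> x = y \<and> y = z) \<and>
     (\<forall>x\<in>X. \<forall>y\<in>X. \<forall>z\<in>X. \<forall>a\<in>X.
        S x y z \<le> b * (S x x a + S y y a + S z z a))"

definition Sb_hyperbola :: "'a set \<Rightarrow> ('a \<Rightarrow> 'a \<Rightarrow> 'a \<Rightarrow> real) \<Rightarrow> real \<Rightarrow> 'a \<Rightarrow> 'a \<Rightarrow> 'a set" where
  "Sb_hyperbola X S r x1 x2 = {x \<in> X. \<bar>S x x x1 - S x x x2\<bar> = r}"

end

theory Submission
  imports Defs
begin

text \<open>If x on the hyperbola were not fixed, its displacement S x x (f x) would be at least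
  r = |S x x x1 - S x x x2|, so by monotonicity
  \<phi>(S x x (f x)) \<ge> \<phi> r > (\<phi> r) powr \<alpha>, because \<phi> r > 1 and \<alpha> < 1;
  this contradicts the contraction condition.\<close>

lemma powr_less_self:
  fixes y \<alpha> :: real
  assumes "1 < y" "\<alpha> < 1"
  shows "y powr \<alpha> < y"
  using powr_less_mono[OF assms(2,1)] assms(1) by simp

lemma mono_gt_one_powr_less:
  fixes \<phi> :: "real \<Rightarrow> real"
  assumes phi_mono: "\<forall>s t. 0 < s \<longrightarrow> s \<le> t \<longrightarrow> \<phi> s \<le> \<phi> t"
    and phi_range: "\<forall>t. 0 < t \<longrightarrow> \<phi> t > 1"
    and "\<alpha> < 1" "0 < t" "t \<le> s"
  shows "\<phi> t powr \<alpha> < \<phi> s"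
proof -
  have "\<phi> t powr \<alpha> < \<phi> t"
    using powr_less_self phi_range \<open>0 < t\<close> \<open>\<alpha> < 1\<close> by blast
  also have "\<dots> \<le> \<phi> s"
    using phi_mono \<open>0 < t\<close> \<open>t \<le> s\<close> by blast
  finally show ?thesis .
qed

lemma Sb_displacement_Inf_le:
  assumes sp: "Sb_metric_space X S b"
    and fX: "\<forall>x\<in>X. f x \<in> X"
    and "x \<in> X" "x \<noteq> f x"
  shows "Inf {S y y (f y) | y. y \<in> X \<and> y \<noteq> f y} \<le> S x x (f x)"
proof (rule cInf_lower)
  show "bdd_below {S y y (f y) | y. y \<in> X \<and> y \<noteq> f y}"
    using sp fX unfolding Sb_metric_space_def bdd_below_def by (intro exI[of _ 0]) auto
qed (use assms in auto)

theorem theorem2p11: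
  fixes X :: "'a set" and S :: "'a \<Rightarrow> 'a \<Rightarrow> 'a \<Rightarrow> real" and b :: real
    and f :: "'a \<Rightarrow> 'a" and x1 x2 :: 'a and \<alpha> :: real and \<phi> :: "real \<Rightarrow> real"
  assumes sp: "Sb_metric_space X S b"
    and x1: "x1 \<in> X" and x2: "x2 \<in> X"
    and fX: "\<forall>x\<in>X. f x \<in> X"
    and alpha: "0 < \<alpha>" "\<alpha> < 1"
    and phi_mono: "\<forall>s t. 0 < s \<longrightarrow> s \<le> t \<longrightarrow> \<phi> s \<le> \<phi> t"
    and phi_range: "\<forall>t. 0 < t \<longrightarrow> \<phi> t > 1"
    and contr: "\<forall>x \<in> X - {x1, x2}. S x x (f x) > 0 \<longrightarrow>
                  \<phi> (S x x (f x)) \<le> (\<phi> \<bar>S x x x1 - S x x x2\<bar>) powr \<alpha>"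
    and fix1: "f x1 = x1" and fix2: "f x2 = x2"
    and rpos: "Inf {S x x (f x) | x. x \<in> X \<and> x \<noteq> f x} > 0"
  shows "\<forall>x \<in> Sb_hyperbola X S (Inf {S x x (f x) | x. x \<in> X \<and> x \<noteq> f x}) x1 x2. f x = x"
proof
  define r where "r = Inf {S x x (f x) | x. x \<in> X \<and> x \<noteq> f x}"
  fix x assume "x \<in> Sb_hyperbola X S r x1 x2"
  then have xX: "x \<in> X" and on_hyperbola: "\<bar>S x x x1 - S x x x2\<bar> = r"
    by (auto simp: Sb_hyperbola_def)
  show "f x = x"
  proof (rule ccontr)
    assume moved: "f x \<noteq> x"
    have r_le: "r \<le> S x x (f x)"
      unfolding r_def using Sb_displacement_Inf_le[OF sp fX xX] moved by simp
    have "r > 0" using rpos unfolding r_def .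
    have "x \<in> X - {x1, x2}" using xX moved fix1 fix2 by auto
    moreover have "S x x (f x) > 0" using r_le \<open>r > 0\<close> by linarith
    ultimately have "\<phi> (S x x (f x)) \<le> \<phi> r powr \<alpha>"
      using contr on_hyperbola by blast
    moreover have "\<phi> r powr \<alpha> < \<phi> (S x x (f x))"
      using mono_gt_one_powr_less[OF phi_mono phi_range \<open>\<alpha> < 1\<close> \<open>r > 0\<close> r_le] .
    ultimately show False by simp
  qed
qed

end
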